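(* Consider the system \[ \begin{aligned} \dot S_1 &= (S^{(0)}-S_1)D - y_1\mu_1(S_1)X_1,\\ \dot X_1 &= -D_1X_1 + \mu_1(S_1)X_1,\\ \dot S_2 &= -DS_2 + y_2\mu_1(S_1)X_1 - y_3\mu_2(S_2,S_3)X_2,\\ \dot S_3 &= -DS_3 + y_4\mu_1(S_1)X_1,\\ \dot X_2 &= -D_2X_2 + \mu_2(S_2,S_3)X_2, \end{aligned} \] on the nonnegative orthant of $(S_1,X_1,S_2,S_3,X_2)$-space, under the standing assumptions described in the context. If $\lambda_1\ge S^{(0)}$, then $E=(S^{(0)},0,0,0,0)$ is a globally asymptotically stable equilibrium of this system.
   Context: Parameters: $D>0$, $S^{(0)}>0$, $D_i=D+k_i$ with $k_i\ge 0$ ($i=1,2$), and $y_1,y_2,y_3,y_4>0$. The functions $\mu_1,\mu_2$ satisfy: (H1) $\mu_1\in C^1(\mathbb{R}_+)$ and $\mu_1'(S_1)>0$ for all $S_1>0$; (H2) $\mu_1(0)=0$ and $\mu_1(S_1)>0$ for $S_1>0$; (H3) $\mu_2\in C^1(\mathbb{R}^2_+)$ and $\mu_2(S_2,S_3)>0$ if $S_2>0,S_3>0$; (H4) $\lim_{S_3\to\infty}\mu_2(S_2,S_3)=0$ for all $S_2\ge0$; (H5) $\lim_{S_2\to\infty}\mu_2(S_2,S_3)=0$ for all $S_3\ge0$; (H6) $\mu_2(0,S_3)=0$ for all $S_3\ge0$ and $\mu_2(S_2,0)\ge0$ for $S_2>0$; (H7) there is a continuous $\Gamma:\mathbb{R}_+\to\mathbb{R}$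 with $\partial_{S_2}\mu_2(S_2,S_3)>0$ for $S_2<\Gamma(S_3)$ and $<0$ for $S_2>\Gamma(S_3)$. The break-even concentration $\lambda_1$ is the unique positive extended real number with $\mu_1(\lambda_1)=D_1$; if no such number exists, $\lambda_1=+\infty$. *)

theory Defs
  imports "HOL-Analysis.Analysis"
begin

text \<open>States (S1, X1, S2, S3, X2) of the chemostat model.\<close>
type_synonym state = "real \<times> real \<times> real \<times> real \<times> real"

definition orthant :: "state set" where
  "orthant = {(s1, x1, s2, s3, x2). s1 \<ge> 0 \<and> x1 \<ge> 0 \<and> s2 \<ge> 0 \<and> s3 \<ge> 0 \<and> x2 \<ge> 0}"

definition chemo_field ::
  "real \<Rightarrow> real \<Rightarrow> real \<Rightarrow> real \<Rightarrow> real \<Rightarrow> real \<Rightarrow> real \<Rightarrow> real \<Rightarrow>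
   (real \<Rightarrow> real) \<Rightarrow> (real \<Rightarrow> real \<Rightarrow> real) \<Rightarrow> state \<Rightarrow> state" where
  "chemo_field D S0 D1 D2 y1 y2 y3 y4 mu1 mu2 =
     (\<lambda>(s1, x1, s2, s3, x2).
        ((S0 - s1) * D - y1 * mu1 s1 * x1,
         - D1 * x1 + mu1 s1 * x1,
         - D * s2 + y2 * mu1 s1 * x1 - y3 * mu2 s2 s3 * x2,
         - D * s3 + y4 * mu1 s1 * x1,
         - D2 * x2 + mu2 s2 s3 * x2))"

definition is_solution :: "(state \<Rightarrow> state) \<Rightarrow> (real \<Rightarrow> state) \<Rightarrow> bool" where
  "is_solution F x \<longleftrightarrow>
     (\<forall>t\<ge>0. (x has_vector_derivative F (x t)) (at t within {0..})) \<and>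
     (\<forall>t\<ge>0. x t \<in> orthant)"

definition globally_asymptotically_stable :: "(state \<Rightarrow> state) \<Rightarrow> state \<Rightarrow> bool" where
  "globally_asymptotically_stable F e \<longleftrightarrow>
     e \<in> orthant \<and> F e = 0 \<and>
     (\<forall>\<epsilon>>0. \<exists>\<delta>>0. \<forall>x. is_solution F x \<and> dist (x 0) e < \<delta> \<longrightarrow>
          (\<forall>t\<ge>0. dist (x t) e < \<epsilon>)) \<and>
     (\<forall>x. is_solution F x \<longrightarrow> (x \<longlongrightarrow> e) at_top)"

definition break_even :: "(real \<Rightarrow> real) \<Rightarrow> real \<Rightarrow> ereal" where
  "break_even mu1 D1 =
     (if \<exists>s>0. mu1 s = D1 then ereal (THE s. s > 0 \<and> mu1 s = D1) else \<infinity>)"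

end

theory Submission
  imports Defs
begin

text \<open>
  The substrate excess z = S1 + y1 X1 - S0 satisfies z' = -D z - y1 k1 X1 \<le> -D z, so z
  eventually drops below any positive level. As long as X1 is not small this keeps S1 a fixed
  amount below S0, where mu1 S1 < mu1 S0 \<le> D1 by the break-even hypothesis, so X1 tends to 0.
  Then z tends to 0, hence S1 to S0, and S2, S3 obey linear equations driven by the vanishing
  uptake mu1 S1 X1, so they tend to 0; finally mu2 (S2, S3) tends to mu2 (0, 0) = 0 < D2 and X2
  decays. The same comparison arguments, run from a start within distance \<delta> of the washout,
  bound every component by a constant multiple of \<delta>, which gives Lyapunov stability.
\<close>

section \<open>Scalar differential inequalities\<close>

lemma mvt_within_atLeast:
  fixes f f' :: "real \<Rightarrow> real"
  assumes deriv: "\<And>t. t \<ge> a \<Longrightarrow> (f has_real_derivative f' t) (at t within {a..})"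
    and "a \<le> p" "p < q"
  shows "\<exists>\<xi>. p < \<xi> \<and> \<xi> < q \<and> f q - f p = (q - p) * f' \<xi>"
proof -
  have "continuous_on {p..q} f"
    by (rule DERIV_continuous_on, rule DERIV_subset[OF deriv]) (use assms in auto)
  moreover have deriv_at: "(f has_real_derivative f' t) (at t)" if "p < t" for t
    using deriv[of t] at_within_interior[of t "{a..}"] that assms by simp
  ultimately obtain l \<xi> where "p < \<xi>" "\<xi> < q" "DERIV f \<xi> :> l" "f q - f p = (q - p) * l"
    using MVT[OF \<open>p < q\<close>] by (meson real_differentiable_def)
  moreover have "l = f' \<xi>"
    using DERIV_unique \<open>DERIV f \<xi> :> l\<close> deriv_at \<open>p < \<xi>\<close> by blast
  ultimately show ?thesis by blast
qed

lemma strict_mono_on_if_deriv_pos: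
  fixes f f' :: "real \<Rightarrow> real"
  assumes deriv: "\<And>t. t \<ge> a \<Longrightarrow> (f has_real_derivative f' t) (at t within {a..})"
    and pos: "\<And>t. t > a \<Longrightarrow> f' t > 0"
  shows "strict_mono_on {a..} f"
proof (rule strict_mono_onI)
  fix p q assume "p \<in> {a..}" "q \<in> {a..}" "p < q"
  then obtain \<xi> where "p < \<xi>" "f q - f p = (q - p) * f' \<xi>"
    using mvt_within_atLeast[OF deriv] by auto
  moreover have "f' \<xi> > 0" using pos \<open>p < \<xi>\<close> \<open>p \<in> {a..}\<close> by simp
  ultimately have "f q - f p > 0" using \<open>p < q\<close> by simp
  then show "f p < f q" by simp
qed

lemma le_if_deriv_nonpos_above:
  fixes f f' :: "real \<Rightarrow> real"
  assumes deriv: "\<And>t. t \<ge> a \<Longrightarrow> (f has_real_derivative f' t) (at t within {a..})"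
    and start: "f a \<le> M" and nonpos: "\<And>t. t \<ge> a \<Longrightarrow> f t > M \<Longrightarrow> f' t \<le> 0"
    and "t \<ge> a"
  shows "f t \<le> M"
proof (rule ccontr)
  assume "\<not> f t \<le> M"
  then have above_t: "f t > M" by simp
  let ?S = "{s \<in> {a..t}. f s \<le> M}"
  define t0 where "t0 = Sup ?S"
  have "continuous_on {a..t} f"
    by (rule DERIV_continuous_on, rule DERIV_subset[OF deriv]) auto
  then have "closed ?S"
    using continuous_on_closed_Collect_le[OF _ continuous_on_const closed_atLeastAtMost] by blast
  moreover have "?S \<noteq> {}" and bdd: "bdd_above ?S"
    using start \<open>t \<ge> a\<close> by auto
  ultimately have t0: "t0 \<in> ?S"
    unfolding t0_def by (rule closed_contains_Sup[rotated -1])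
  have above: "f s > M" if "t0 < s" "s \<le> t" for s
  proof (rule ccontr)
    assume "\<not> f s > M"
    with that t0 have "s \<in> ?S" by auto
    then have "s \<le> t0" unfolding t0_def using bdd by (rule cSup_upper)
    with \<open>t0 < s\<close> show False by simp
  qed
  from t0 above_t have "t0 < t" by (cases "t0 = t") auto
  then obtain \<xi> where \<xi>: "t0 < \<xi>" "\<xi> < t" "f t - f t0 = (t - t0) * f' \<xi>"
    using mvt_within_atLeast[OF deriv] t0 by auto
  have "f' \<xi> \<le> 0"
    using nonpos above \<xi> t0 by auto
  then have "(t - t0) * f' \<xi> \<le> 0"
    using \<open>t0 < t\<close> by (simp add: mult_nonneg_nonpos)
  then have "f t \<le> f t0"
    using \<xi>(3) by simp
  with t0 above_t show False by auto
qed

lemma le_max_if_linear_decay: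
  fixes f f' :: "real \<Rightarrow> real"
  assumes deriv: "\<And>t. t \<ge> a \<Longrightarrow> (f has_real_derivative f' t) (at t within {a..})"
    and "r > 0" and decay: "\<And>t. t \<ge> a \<Longrightarrow> f' t \<le> - r * f t + c"
    and "t \<ge> a"
  shows "f t \<le> max (f a) (c / r)"
proof (rule le_if_deriv_nonpos_above[OF deriv _ _ \<open>t \<ge> a\<close>])
  fix s assume "s \<ge> a" "f s > max (f a) (c / r)"
  then have "c < r * f s" using \<open>r > 0\<close> by (simp add: pos_divide_less_eq mult.commute)
  then show "f' s \<le> 0" using decay[OF \<open>s \<ge> a\<close>] by simp
qed auto

lemma eventually_le_if_deriv_le_neg_above:
  fixes f f' :: "real \<Rightarrow> real"
  assumes deriv: "\<And>t. t \<ge> a \<Longrightarrow> (f has_real_derivative f' t) (at t within {a..})"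
    and "c > 0" and "eventually (\<lambda>t. f t \<ge> \<epsilon> \<longrightarrow> f' t \<le> - c) at_top"
  shows "eventually (\<lambda>t. f t \<le> \<epsilon>) at_top"
proof -
  obtain T0 where T0: "\<And>t. t \<ge> T0 \<Longrightarrow> f t \<ge> \<epsilon> \<Longrightarrow> f' t \<le> - c"
    using assms(3) by (auto simp: eventually_at_top_linorder)
  define T1 where "T1 = max a T0"
  have deriv_T: "(f has_real_derivative f' t) (at t within {T::real..})"
    if "T \<ge> T1" "t \<ge> T" for T t
    by (rule DERIV_subset[OF deriv]) (use that in \<open>auto simp: T1_def\<close>)
  have "\<exists>T\<ge>T1. f T \<le> \<epsilon>"
  proof (rule ccontr)
    assume "\<not> ?thesis"
    then have above: "\<And>t. t \<ge> T1 \<Longrightarrow> f t > \<epsilon>" by force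
    \<comment> \<open>f drops at rate at least c, so it would fall below \<epsilon> by time t\<close>
    define t where "t = T1 + \<bar>f T1 - \<epsilon>\<bar> / c + 1"
    have "T1 < t" using \<open>c > 0\<close> by (simp add: t_def add_nonneg_pos)
    then obtain \<xi> where \<xi>: "T1 < \<xi>" "\<xi> < t" "f t - f T1 = (t - T1) * f' \<xi>"
      using mvt_within_atLeast[OF deriv_T] by blast
    have "f' \<xi> \<le> - c" using T0 above \<xi> by (simp add: T1_def less_imp_le)
    then have "(t - T1) * f' \<xi> \<le> (t - T1) * (- c)"
      using \<open>T1 < t\<close> by (intro mult_left_mono) auto
    also have "\<dots> = - \<bar>f T1 - \<epsilon>\<bar> - c" using \<open>c > 0\<close> by (simp add: t_def field_simps)
    finally have "f t < \<epsilon>" using \<xi>(3) \<open>c > 0\<close> by linarith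
    with above[of t] \<open>T1 < t\<close> show False by simp
  qed
  then obtain T where T: "T \<ge> T1" "f T \<le> \<epsilon>" by blast
  have "f t \<le> \<epsilon>" if "t \<ge> T" for t
  proof (rule le_if_deriv_nonpos_above[OF deriv_T[OF T(1)] T(2) _ that])
    fix s assume "s \<ge> T" "f s > \<epsilon>"
    then show "f' s \<le> 0" using T0[of s] T \<open>c > 0\<close> by (simp add: T1_def)
  qed
  then show ?thesis by (auto simp: eventually_at_top_linorder)
qed

lemma eventually_le_if_linear_decay:
  fixes f f' h :: "real \<Rightarrow> real"
  assumes deriv: "\<And>t. t \<ge> a \<Longrightarrow> (f has_real_derivative f' t) (at t within {a..})"
    and "r > 0" and decay: "eventually (\<lambda>t. f' t \<le> - r * f t + h t) at_top"
    and "(h \<longlongrightarrow> 0) at_top" and "\<epsilon> > 0"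
  shows "eventually (\<lambda>t. f t \<le> \<epsilon>) at_top"
proof -
  have rate: "r * \<epsilon> / 2 > 0" using \<open>r > 0\<close> \<open>\<epsilon> > 0\<close> by simp
  with \<open>(h \<longlongrightarrow> 0) at_top\<close> have "eventually (\<lambda>t. h t < r * \<epsilon> / 2) at_top"
    by (rule order_tendstoD(2))
  with decay have drop: "eventually (\<lambda>t. f t \<ge> \<epsilon> \<longrightarrow> f' t \<le> - (r * \<epsilon> / 2)) at_top"
  proof eventually_elim
    case (elim t)
    show ?case
    proof
      assume "f t \<ge> \<epsilon>"
      then have "r * \<epsilon> \<le> r * f t" using \<open>r > 0\<close> by simp
      then show "f' t \<le> - (r * \<epsilon> / 2)" using elim by simp
    qed
  qed
  show ?thesis
    using eventually_le_if_deriv_le_neg_above[OF deriv rate drop] .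
qed

lemma tendsto_zero_if_nonneg_eventually_le:
  fixes f :: "real \<Rightarrow> real"
  assumes nonneg: "\<And>t. t \<ge> a \<Longrightarrow> f t \<ge> 0"
    and small: "\<And>\<epsilon>. \<epsilon> > 0 \<Longrightarrow> eventually (\<lambda>t. f t \<le> \<epsilon>) at_top"
  shows "(f \<longlongrightarrow> 0) at_top"
proof (rule order_tendstoI)
  fix b :: real assume "b < 0"
  show "eventually (\<lambda>t. b < f t) at_top"
    using eventually_ge_at_top[of a]
  proof (rule eventually_mono)
    fix t assume "t \<ge> a"
    with nonneg[of t] \<open>b < 0\<close> show "b < f t" by linarith
  qed
next
  fix b :: real assume "b > 0"
  then have "eventually (\<lambda>t. f t \<le> b / 2) at_top" by (intro small) simp
  then show "eventually (\<lambda>t. f t < b) at_top"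
    by (rule eventually_mono) (use \<open>b > 0\<close> in linarith)
qed

lemma tendsto_zero_if_linear_decay:
  fixes f f' h :: "real \<Rightarrow> real"
  assumes deriv: "\<And>t. t \<ge> a \<Longrightarrow> (f has_real_derivative f' t) (at t within {a..})"
    and "r > 0" and "eventually (\<lambda>t. f' t \<le> - r * f t + h t) at_top"
    and "(h \<longlongrightarrow> 0) at_top" and nonneg: "\<And>t. t \<ge> a \<Longrightarrow> f t \<ge> 0"
  shows "(f \<longlongrightarrow> 0) at_top"
  using nonneg eventually_le_if_linear_decay[OF deriv assms(2-4)]
  by (rule tendsto_zero_if_nonneg_eventually_le)

section \<open>The chemostat model\<close>

lemma dist_Pair_le_add: "dist (a, b) (c, d) \<le> dist a c + dist b d"
  unfolding dist_Pair_Pair by (rule sqrt_sum_squares_le_sum) auto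

lemma dist_quintuple_le:
  fixes a1 a2 a3 a4 a5 b1 b2 b3 b4 b5 :: real
  shows "dist (a1, a2, a3, a4, a5) (b1, b2, b3, b4, b5)
    \<le> dist a1 b1 + dist a2 b2 + dist a3 b3 + dist a4 b4 + dist a5 b5"
proof -
  have "dist (a1, a2, a3, a4, a5) (b1, b2, b3, b4, b5)
      \<le> dist a1 b1 + dist (a2, a3, a4, a5) (b2, b3, b4, b5)"
    by (rule dist_Pair_le_add)
  also have "\<dots> \<le> dist a1 b1 + (dist a2 b2 + dist (a3, a4, a5) (b3, b4, b5))"
    by (intro add_left_mono dist_Pair_le_add)
  also have "\<dots> \<le> dist a1 b1 + (dist a2 b2 + (dist a3 b3 + dist (a4, a5) (b4, b5)))"
    by (intro add_left_mono dist_Pair_le_add)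
  also have "\<dots> \<le> dist a1 b1 + (dist a2 b2 + (dist a3 b3 + (dist a4 b4 + dist a5 b5)))"
    by (intro add_left_mono dist_Pair_le_add)
  finally show ?thesis by (simp add: add.assoc)
qed

lemma dist_components_le:
  fixes p q :: "real \<times> real \<times> real \<times> real \<times> real"
  shows "dist (fst p) (fst q) \<le> dist p q" "dist (fst (snd p)) (fst (snd q)) \<le> dist p q"
    "dist (fst (snd (snd p))) (fst (snd (snd q))) \<le> dist p q"
    "dist (fst (snd (snd (snd p)))) (fst (snd (snd (snd q)))) \<le> dist p q"
    "dist (snd (snd (snd (snd p)))) (snd (snd (snd (snd q)))) \<le> dist p q"
proof -
  have snd2: "dist (snd (snd p)) (snd (snd q)) \<le> dist p q"
    using dist_snd_le[of p q] dist_snd_le[of "snd p" "snd q"] by linarith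
  have snd3: "dist (snd (snd (snd p))) (snd (snd (snd q))) \<le> dist p q"
    using snd2 dist_snd_le[of "snd (snd p)" "snd (snd q)"] by linarith
  show "dist (fst p) (fst q) \<le> dist p q" by (rule dist_fst_le)
  show "dist (fst (snd p)) (fst (snd q)) \<le> dist p q"
    using dist_snd_le[of p q] dist_fst_le[of "snd p" "snd q"] by linarith
  show "dist (fst (snd (snd p))) (fst (snd (snd q))) \<le> dist p q"
    using snd2 dist_fst_le[of "snd (snd p)" "snd (snd q)"] by linarith
  show "dist (fst (snd (snd (snd p)))) (fst (snd (snd (snd q)))) \<le> dist p q"
    using snd3 dist_fst_le[of "snd (snd (snd p))" "snd (snd (snd q))"] by linarith
  show "dist (snd (snd (snd (snd p)))) (snd (snd (snd (snd q)))) \<le> dist p q"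
    using snd3 dist_snd_le[of "snd (snd (snd p))" "snd (snd (snd q))"] by linarith
qed

lemma break_even_ge_imp_le:
  fixes mu1 :: "real \<Rightarrow> real"
  assumes mono: "strict_mono_on {0..} mu1" and cont: "continuous_on {0..} mu1"
    and "mu1 0 = 0" and "D1 > 0" and "S0 \<ge> 0" and "break_even mu1 D1 \<ge> ereal S0"
  shows "mu1 S0 \<le> D1"
proof (rule ccontr)
  assume "\<not> mu1 S0 \<le> D1"
  moreover have "continuous_on {0..S0} mu1"
    using cont by (rule continuous_on_subset) auto
  ultimately obtain s where s: "0 \<le> s" "s \<le> S0" "mu1 s = D1"
    using IVT'[of mu1 0 D1 S0] assms(3-5) by auto
  with assms(3,4) \<open>\<not> mu1 S0 \<le> D1\<close> have "0 < s" "s < S0"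
    by (auto simp: le_less)
  have "(THE s. s > 0 \<and> mu1 s = D1) = s"
    using s \<open>0 < s\<close> strict_mono_on_imp_inj_on[OF mono]
    by (intro the_equality) (auto simp: inj_on_def)
  then have "break_even mu1 D1 = ereal s"
    using s \<open>0 < s\<close> by (auto simp: break_even_def)
  with assms(6) \<open>s < S0\<close> show False by simp
qed

locale chemostat =
  fixes D S0 k1 D1 D2 y1 y2 y3 y4 :: real
    and mu1 :: "real \<Rightarrow> real" and mu2 :: "real \<Rightarrow> real \<Rightarrow> real"
  assumes D_pos: "D > 0" and S0_pos: "S0 > 0" and k1_nonneg: "k1 \<ge> 0" and D1_eq: "D1 = D + k1"
    and D2_pos: "D2 > 0"
    and y1_pos: "y1 > 0" and y2_pos: "y2 > 0" and y3_pos: "y3 > 0" and y4_pos: "y4 > 0"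
    and mu1_strict_mono: "strict_mono_on {0..} mu1"
    and mu1_zero: "mu1 0 = 0"
    and mu1_continuous: "continuous_on {0..} mu1"
    and mu1_S0_le: "mu1 S0 \<le> D1"
    and mu2_nonneg: "\<And>a b. 0 \<le> a \<Longrightarrow> 0 \<le> b \<Longrightarrow> 0 \<le> mu2 a b"
    and mu2_continuous: "continuous_on ({0..} \<times> {0..}) (\<lambda>(a, b). mu2 a b)"
    and mu2_zero: "mu2 0 0 = 0"
begin

abbreviation rhs :: "state \<Rightarrow> state" where
  "rhs \<equiv> chemo_field D S0 D1 D2 y1 y2 y3 y4 mu1 mu2"

abbreviation washout :: state where
  "washout \<equiv> (S0, 0, 0, 0, 0)"

lemma mu1_less: "0 \<le> a \<Longrightarrow> a < b \<Longrightarrow> mu1 a < mu1 b"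
  by (rule strict_mono_onD[OF mu1_strict_mono]) auto

lemma mu1_mono: "0 \<le> a \<Longrightarrow> a \<le> b \<Longrightarrow> mu1 a \<le> mu1 b"
  using mu1_less[of a b] by (cases "a = b") auto

lemma mu1_nonneg: "0 \<le> a \<Longrightarrow> 0 \<le> mu1 a"
  using mu1_mono[of 0 a] mu1_zero by simp

lemma mu2_less_near_origin:
  assumes "e > 0"
  shows "\<exists>\<rho>>0. \<forall>a b. 0 \<le> a \<longrightarrow> a \<le> \<rho> \<longrightarrow> 0 \<le> b \<longrightarrow> b \<le> \<rho> \<longrightarrow> mu2 a b < e"
proof -
  have "continuous (at (0, 0) within {0..} \<times> {0..}) (\<lambda>(a, b). mu2 a b)"
    using mu2_continuous by (simp add: continuous_on_eq_continuous_within)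
  then obtain d where "d > 0" and d: "\<And>a b. 0 \<le> a \<Longrightarrow> 0 \<le> b \<Longrightarrow> dist (a, b) (0, 0) < d \<Longrightarrow>
      dist (mu2 a b) (mu2 0 0) < e"
    using \<open>e > 0\<close> unfolding continuous_within_eps_delta by fastforce
  have "mu2 a b < e" if "0 \<le> a" "a \<le> d / 3" "0 \<le> b" "b \<le> d / 3" for a b
  proof -
    have "dist (a, b) (0, 0) \<le> dist a 0 + dist b 0" by (rule dist_Pair_le_add)
    also have "\<dots> < d" using that \<open>d > 0\<close> by (simp add: dist_real_def)
    finally show ?thesis using d[of a b] that mu2_zero by (simp add: dist_real_def)
  qed
  then show ?thesis using \<open>d > 0\<close> by (intro exI[of _ "d / 3"]) auto
qed

text \<open>A solution starting within distance \<delta> \<le> 1 of the washout keeps X1 below x1_gain * \<delta>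
  and every component within washout_gain * \<delta> of the washout.\<close>
definition x1_gain :: real where
  "x1_gain = (1 + y1) / y1"

definition washout_gain :: real where
  "washout_gain = 1 + y1 + x1_gain + y1 * k1 * x1_gain / D
     + y2 * mu1 (S0 + 1 + y1) * x1_gain / D + y4 * mu1 (S0 + 1 + y1) * x1_gain / D"

lemma x1_gain_ge_1: "x1_gain \<ge> 1"
  using y1_pos by (simp add: x1_gain_def)

lemma washout_gain_mult:
  "washout_gain * \<delta> = (1 + y1) * \<delta> + x1_gain * \<delta> + y1 * k1 * x1_gain * \<delta> / D
     + y2 * mu1 (S0 + 1 + y1) * x1_gain * \<delta> / D + y4 * mu1 (S0 + 1 + y1) * x1_gain * \<delta> / D"
  by (simp add: washout_gain_def algebra_simps)

lemma washout_gain_terms_bounds: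
  assumes "\<delta> \<ge> 0"
  shows "\<delta> \<le> x1_gain * \<delta>" "0 \<le> (1 + y1) * \<delta>" "0 \<le> y1 * k1 * x1_gain * \<delta> / D"
    "0 \<le> y2 * mu1 (S0 + 1 + y1) * x1_gain * \<delta> / D" "0 \<le> y4 * mu1 (S0 + 1 + y1) * x1_gain * \<delta> / D"
proof -
  have "0 \<le> mu1 (S0 + 1 + y1)"
    using S0_pos y1_pos by (intro mu1_nonneg) simp
  then show "0 \<le> (1 + y1) * \<delta>" "0 \<le> y1 * k1 * x1_gain * \<delta> / D"
    "0 \<le> y2 * mu1 (S0 + 1 + y1) * x1_gain * \<delta> / D" "0 \<le> y4 * mu1 (S0 + 1 + y1) * x1_gain * \<delta> / D"
    using assms y1_pos y2_pos y4_pos k1_nonneg D_pos x1_gain_ge_1 by simp_all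
  show "\<delta> \<le> x1_gain * \<delta>"
    using mult_right_mono[OF x1_gain_ge_1 assms] by simp
qed

lemma washout_gain_pos: "washout_gain > 0"
  using washout_gain_mult[of 1] washout_gain_terms_bounds[OF zero_le_one] y1_pos by simp

end

locale chemostat_solution = chemostat +
  fixes x :: "real \<Rightarrow> state"
  assumes solution: "is_solution (chemo_field D S0 D1 D2 y1 y2 y3 y4 mu1 mu2) x"
begin

definition s1 :: "real \<Rightarrow> real" where "s1 t = fst (x t)"
definition x1 :: "real \<Rightarrow> real" where "x1 t = fst (snd (x t))"
definition s2 :: "real \<Rightarrow> real" where "s2 t = fst (snd (snd (x t)))"
definition s3 :: "real \<Rightarrow> real" where "s3 t = fst (snd (snd (snd (x t))))"
definition x2 :: "real \<Rightarrow> real" where "x2 t = snd (snd (snd (snd (x t))))"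

lemma state_eq: "x t = (s1 t, x1 t, s2 t, s3 t, x2 t)"
  by (simp add: s1_def x1_def s2_def s3_def x2_def)

lemma components_nonneg:
  assumes "t \<ge> 0"
  shows "0 \<le> s1 t" "0 \<le> x1 t" "0 \<le> s2 t" "0 \<le> s3 t" "0 \<le> x2 t"
  using solution assms unfolding is_solution_def by (auto simp: state_eq orthant_def)

lemma component_has_real_derivative:
  assumes "bounded_linear L" and "t \<ge> 0"
  shows "((\<lambda>t. L (x t)) has_real_derivative L (rhs (x t))) (at t within {0..})"
  using bounded_linear.has_vector_derivative[OF assms(1)] solution assms(2)
  unfolding is_solution_def has_real_derivative_iff_has_vector_derivative by blast

lemma s1_deriv: "t \<ge> 0 \<Longrightarrow>
    (s1 has_real_derivative (S0 - s1 t) * D - y1 * mu1 (s1 t) * x1 t) (at t within {0..})"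
  using component_has_real_derivative[of fst]
  by (simp add: state_eq chemo_field_def bounded_linear_fst)

lemma x1_deriv: "t \<ge> 0 \<Longrightarrow>
    (x1 has_real_derivative - D1 * x1 t + mu1 (s1 t) * x1 t) (at t within {0..})"
  using component_has_real_derivative[of "\<lambda>p. fst (snd p)"]
  by (simp add: state_eq chemo_field_def bounded_linear_fst_comp bounded_linear_snd_comp)

lemma s2_deriv: "t \<ge> 0 \<Longrightarrow>
    (s2 has_real_derivative - D * s2 t + y2 * mu1 (s1 t) * x1 t - y3 * mu2 (s2 t) (s3 t) * x2 t)
      (at t within {0..})"
  using component_has_real_derivative[of "\<lambda>p. fst (snd (snd p))"]
  by (simp add: state_eq chemo_field_def bounded_linear_fst_comp bounded_linear_snd_comp)

lemma s3_deriv: "t \<ge> 0 \<Longrightarrow>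
    (s3 has_real_derivative - D * s3 t + y4 * mu1 (s1 t) * x1 t) (at t within {0..})"
  using component_has_real_derivative[of "\<lambda>p. fst (snd (snd (snd p)))"]
  by (simp add: state_eq chemo_field_def bounded_linear_fst_comp bounded_linear_snd_comp)

lemma x2_deriv: "t \<ge> 0 \<Longrightarrow>
    (x2 has_real_derivative - D2 * x2 t + mu2 (s2 t) (s3 t) * x2 t) (at t within {0..})"
  using component_has_real_derivative[of "\<lambda>p. snd (snd (snd (snd p)))"]
  by (simp add: state_eq chemo_field_def bounded_linear_snd_comp)

section \<open>Convergence to the washout equilibrium\<close>

definition excess :: "real \<Rightarrow> real" where
  "excess t = s1 t + y1 * x1 t - S0"

lemma excess_deriv:
  assumes "t \<ge> 0"
  shows "(excess has_real_derivative - D * excess t - y1 * k1 * x1 t) (at t within {0..})"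
proof -
  have "((\<lambda>t. s1 t + y1 * x1 t - S0) has_real_derivative
      (S0 - s1 t) * D - y1 * mu1 (s1 t) * x1 t + y1 * (- D1 * x1 t + mu1 (s1 t) * x1 t) - 0)
      (at t within {0..})"
    by (intro DERIV_diff DERIV_add DERIV_cmult s1_deriv x1_deriv DERIV_const assms)
  then show ?thesis
    unfolding excess_def[abs_def] by (rule DERIV_cong) (simp add: D1_eq algebra_simps)
qed

lemma neg_excess_deriv: "t \<ge> 0 \<Longrightarrow>
    ((\<lambda>t. - excess t) has_real_derivative - D * (- excess t) + y1 * k1 * x1 t) (at t within {0..})"
  by (rule DERIV_cong, rule DERIV_minus[OF excess_deriv]) auto

lemma excess_deriv_le: "t \<ge> 0 \<Longrightarrow> - D * excess t - y1 * k1 * x1 t \<le> - D * excess t + 0"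
  using components_nonneg(2)[of t] y1_pos k1_nonneg by simp

lemma excess_eventually_le: "\<epsilon> > 0 \<Longrightarrow> eventually (\<lambda>t. excess t \<le> \<epsilon>) at_top"
proof (rule eventually_le_if_linear_decay[OF excess_deriv D_pos _ tendsto_const])
  show "eventually (\<lambda>t. - D * excess t - y1 * k1 * x1 t \<le> - D * excess t + 0) at_top"
    using eventually_ge_at_top[of 0] by (rule eventually_mono) (rule excess_deriv_le)
qed

text \<open>Once the excess is below y1 \<epsilon> / 2, a biomass X1 \<ge> \<epsilon> forces S1 \<le> S0 - y1 \<epsilon> / 2,
  where the growth rate falls short of D1 by a fixed margin.\<close>
lemma x1_eventually_le:
  assumes "\<epsilon> > 0"
  shows "eventually (\<lambda>t. x1 t \<le> \<epsilon>) at_top"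
proof -
  define \<sigma> where "\<sigma> = max 0 (S0 - y1 * \<epsilon> / 2)"
  have "mu1 \<sigma> < mu1 S0"
    using S0_pos y1_pos assms by (intro mu1_less) (auto simp: \<sigma>_def)
  define c where "c = (mu1 S0 - mu1 \<sigma>) * \<epsilon>"
  have "c > 0" using \<open>mu1 \<sigma> < mu1 S0\<close> assms by (simp add: c_def)
  have "eventually (\<lambda>t. excess t \<le> y1 * \<epsilon> / 2) at_top"
    using y1_pos assms by (intro excess_eventually_le) simp
  with eventually_ge_at_top[of 0]
  have drop: "eventually (\<lambda>t. x1 t \<ge> \<epsilon> \<longrightarrow> - D1 * x1 t + mu1 (s1 t) * x1 t \<le> - c) at_top"
  proof eventually_elim
    case (elim t)
    show ?case
    proof
      assume "x1 t \<ge> \<epsilon>"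
      then have "y1 * \<epsilon> \<le> y1 * x1 t" using y1_pos by simp
      then have "s1 t \<le> \<sigma>" using elim by (simp add: excess_def \<sigma>_def)
      then have "mu1 (s1 t) - D1 \<le> mu1 \<sigma> - mu1 S0"
        using mu1_mono[of "s1 t" \<sigma>] components_nonneg(1)[of t] elim mu1_S0_le by simp
      then have "(mu1 (s1 t) - D1) * x1 t \<le> (mu1 \<sigma> - mu1 S0) * x1 t"
        using components_nonneg(2)[of t] elim by (intro mult_right_mono) auto
      also have "\<dots> \<le> (mu1 \<sigma> - mu1 S0) * \<epsilon>"
        using \<open>mu1 \<sigma> < mu1 S0\<close> \<open>x1 t \<ge> \<epsilon>\<close> by (intro mult_left_mono_neg) auto
      finally show "- D1 * x1 t + mu1 (s1 t) * x1 t \<le> - c"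
        by (simp add: c_def algebra_simps)
    qed
  qed
  show ?thesis
    using eventually_le_if_deriv_le_neg_above[OF x1_deriv \<open>c > 0\<close> drop] .
qed

lemma x1_tendsto: "(x1 \<longlongrightarrow> 0) at_top"
  using components_nonneg(2) x1_eventually_le by (rule tendsto_zero_if_nonneg_eventually_le)

lemma excess_tendsto: "(excess \<longlongrightarrow> 0) at_top"
proof (rule order_tendstoI)
  fix b :: real assume "b < 0"
  have "((\<lambda>t. y1 * k1 * x1 t) \<longlongrightarrow> 0) at_top"
    by (rule tendsto_mult_right_zero[OF x1_tendsto])
  then have "eventually (\<lambda>t. - excess t \<le> - b / 2) at_top"
    using \<open>b < 0\<close> by (intro eventually_le_if_linear_decay[OF neg_excess_deriv D_pos]) auto
  then show "eventually (\<lambda>t. b < excess t) at_top"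
    by (rule eventually_mono) (use \<open>b < 0\<close> in linarith)
next
  fix b :: real assume "b > 0"
  then have "eventually (\<lambda>t. excess t \<le> b / 2) at_top" by (intro excess_eventually_le) simp
  then show "eventually (\<lambda>t. excess t < b) at_top"
    by (rule eventually_mono) (use \<open>b > 0\<close> in linarith)
qed

lemma s1_tendsto: "(s1 \<longlongrightarrow> S0) at_top"
proof -
  have "((\<lambda>t. excess t + S0 - y1 * x1 t) \<longlongrightarrow> 0 + S0 - y1 * 0) at_top"
    by (intro tendsto_intros excess_tendsto x1_tendsto)
  then show ?thesis by (simp add: excess_def)
qed

lemma uptake_tendsto: "((\<lambda>t. mu1 (s1 t) * x1 t) \<longlongrightarrow> 0) at_top"
proof -
  have "eventually (\<lambda>t. s1 t \<in> {0..}) at_top"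
    using eventually_ge_at_top[of 0] by (rule eventually_mono) (simp add: components_nonneg(1))
  with S0_pos have "((\<lambda>t. mu1 (s1 t)) \<longlongrightarrow> mu1 S0) at_top"
    by (intro continuous_on_tendsto_compose[OF mu1_continuous s1_tendsto]) auto
  from tendsto_mult[OF this x1_tendsto] show ?thesis by simp
qed

lemma s3_tendsto: "(s3 \<longlongrightarrow> 0) at_top"
proof (rule tendsto_zero_if_linear_decay[OF s3_deriv D_pos _ _ components_nonneg(4)])
  show "((\<lambda>t. y4 * mu1 (s1 t) * x1 t) \<longlongrightarrow> 0) at_top"
    using tendsto_mult_right_zero[OF uptake_tendsto, of y4] by (simp add: mult.assoc)
qed auto

lemma s2_tendsto: "(s2 \<longlongrightarrow> 0) at_top"
proof (rule tendsto_zero_if_linear_decay[OF s2_deriv D_pos _ _ components_nonneg(3)])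
  show "((\<lambda>t. y2 * (mu1 (s1 t) * x1 t)) \<longlongrightarrow> 0) at_top"
    by (rule tendsto_mult_right_zero[OF uptake_tendsto])
  show "eventually (\<lambda>t. - D * s2 t + y2 * mu1 (s1 t) * x1 t - y3 * mu2 (s2 t) (s3 t) * x2 t
      \<le> - D * s2 t + y2 * (mu1 (s1 t) * x1 t)) at_top"
    using eventually_ge_at_top[of 0]
  proof (rule eventually_mono)
    fix t :: real assume "t \<ge> 0"
    then have "0 \<le> y3 * mu2 (s2 t) (s3 t) * x2 t"
      using y3_pos mu2_nonneg components_nonneg[of t] by simp
    then show "- D * s2 t + y2 * mu1 (s1 t) * x1 t - y3 * mu2 (s2 t) (s3 t) * x2 t
        \<le> - D * s2 t + y2 * (mu1 (s1 t) * x1 t)" by (simp add: mult.assoc)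
  qed
qed auto

lemma mu2_tendsto: "((\<lambda>t. mu2 (s2 t) (s3 t)) \<longlongrightarrow> 0) at_top"
proof -
  have "eventually (\<lambda>t. (s2 t, s3 t) \<in> {0..} \<times> {0..}) at_top"
    using eventually_ge_at_top[of 0] by (rule eventually_mono) (simp add: components_nonneg(3,4))
  then have "((\<lambda>t. (\<lambda>(a, b). mu2 a b) (s2 t, s3 t)) \<longlongrightarrow> (\<lambda>(a, b). mu2 a b) (0, 0)) at_top"
    by (intro continuous_on_tendsto_compose[OF mu2_continuous] tendsto_Pair s2_tendsto s3_tendsto)
      auto
  then show ?thesis by (simp add: mu2_zero)
qed

lemma x2_tendsto: "(x2 \<longlongrightarrow> 0) at_top"
proof (rule tendsto_zero_if_linear_decay[OF x2_deriv _ _ tendsto_const components_nonneg(5)])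
  show "D2 / 2 > 0" using D2_pos by simp
  have "eventually (\<lambda>t. mu2 (s2 t) (s3 t) < D2 / 2) at_top"
    using D2_pos by (intro order_tendstoD(2)[OF mu2_tendsto]) simp
  with eventually_ge_at_top[of 0]
  show "eventually (\<lambda>t. - D2 * x2 t + mu2 (s2 t) (s3 t) * x2 t \<le> - (D2 / 2) * x2 t + 0) at_top"
  proof eventually_elim
    case (elim t)
    then have "(mu2 (s2 t) (s3 t) - D2 / 2) * x2 t \<le> 0"
      using components_nonneg(5)[of t] by (intro mult_nonpos_nonneg) auto
    then show ?case by (simp add: algebra_simps)
  qed
qed auto

lemma converges_to_washout: "(x \<longlongrightarrow> washout) at_top"
proof -
  have "((\<lambda>t. (s1 t, x1 t, s2 t, s3 t, x2 t)) \<longlongrightarrow> washout) at_top"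
    by (intro tendsto_Pair s1_tendsto x1_tendsto s2_tendsto s3_tendsto x2_tendsto)
  then show ?thesis by (simp add: state_eq[symmetric])
qed

section \<open>Stability of the washout equilibrium\<close>

context
  fixes \<delta> :: real
  assumes \<delta>_nonneg: "0 \<le> \<delta>" and \<delta>_le_1: "\<delta> \<le> 1" and start_near: "dist (x 0) washout \<le> \<delta>"
begin

lemma initial_deviation_le:
  "\<bar>s1 0 - S0\<bar> \<le> \<delta>" "x1 0 \<le> \<delta>" "s2 0 \<le> \<delta>" "s3 0 \<le> \<delta>" "x2 0 \<le> \<delta>"
  using dist_components_le[of "x 0" washout] start_near
  by (auto simp: state_eq dist_real_def)

lemma excess_le_near: "t \<ge> 0 \<Longrightarrow> excess t \<le> (1 + y1) * \<delta>"
proof -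
  assume "t \<ge> 0"
  have "excess t \<le> max (excess 0) (0 / D)"
    by (intro le_max_if_linear_decay[OF excess_deriv D_pos excess_deriv_le \<open>t \<ge> 0\<close>])
  moreover have "excess 0 \<le> (1 + y1) * \<delta>"
  proof -
    have "y1 * x1 0 \<le> y1 * \<delta>" using initial_deviation_le(2) y1_pos by simp
    then show ?thesis
      using initial_deviation_le(1) by (simp add: excess_def abs_le_iff algebra_simps)
  qed
  ultimately show ?thesis
    using washout_gain_terms_bounds(2)[OF \<delta>_nonneg] by simp
qed

lemma s1_le_near: "t \<ge> 0 \<Longrightarrow> s1 t - S0 \<le> (1 + y1) * \<delta>"
proof -
  assume "t \<ge> 0"
  then have "0 \<le> y1 * x1 t" using components_nonneg(2) y1_pos by simp
  with excess_le_near[OF \<open>t \<ge> 0\<close>] show ?thesis by (simp add: excess_def)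
qed

lemma x1_le_near: "t \<ge> 0 \<Longrightarrow> x1 t \<le> x1_gain * \<delta>"
proof (rule le_if_deriv_nonpos_above[OF x1_deriv])
  show "x1 0 \<le> x1_gain * \<delta>"
    using initial_deviation_le(2) washout_gain_terms_bounds(1)[OF \<delta>_nonneg] by linarith
next
  fix s :: real assume "s \<ge> 0" "x1 s > x1_gain * \<delta>"
  then have "(1 + y1) * \<delta> < y1 * x1 s"
    using y1_pos by (simp add: x1_gain_def field_simps)
  with excess_le_near[OF \<open>s \<ge> 0\<close>] have "s1 s \<le> S0"
    by (simp add: excess_def)
  then have "mu1 (s1 s) - D1 \<le> 0"
    using mu1_mono components_nonneg(1)[OF \<open>s \<ge> 0\<close>] mu1_S0_le by fastforce
  then have "(mu1 (s1 s) - D1) * x1 s \<le> 0"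
    using components_nonneg(2)[OF \<open>s \<ge> 0\<close>] by (rule mult_nonpos_nonneg)
  then show "- D1 * x1 s + mu1 (s1 s) * x1 s \<le> 0" by (simp add: algebra_simps)
qed

lemma uptake_le_near: "t \<ge> 0 \<Longrightarrow> mu1 (s1 t) * x1 t \<le> mu1 (S0 + 1 + y1) * (x1_gain * \<delta>)"
proof -
  assume "t \<ge> 0"
  have "(1 + y1) * \<delta> \<le> 1 + y1"
    using \<delta>_le_1 y1_pos by (simp add: mult_left_le)
  with s1_le_near[OF \<open>t \<ge> 0\<close>] have "s1 t \<le> S0 + 1 + y1" by linarith
  then show ?thesis
    using mu1_mono mu1_nonneg components_nonneg[OF \<open>t \<ge> 0\<close>] x1_le_near[OF \<open>t \<ge> 0\<close>]
    by (intro mult_mono) auto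
qed

lemma s1_deviation_le_near: "t \<ge> 0 \<Longrightarrow> \<bar>s1 t - S0\<bar> \<le> washout_gain * \<delta>"
proof -
  assume "t \<ge> 0"
  have "y1 * x1 t \<le> y1 * (x1_gain * \<delta>)"
    using x1_le_near[OF \<open>t \<ge> 0\<close>] y1_pos by simp
  also have "\<dots> = (1 + y1) * \<delta>"
    using y1_pos by (simp add: x1_gain_def)
  finally have y1x1: "y1 * x1 t \<le> (1 + y1) * \<delta>" .
  have decay: "- D * (- excess s) + y1 * k1 * x1 s
      \<le> - D * (- excess s) + y1 * k1 * x1_gain * \<delta>" if "s \<ge> 0" for s
    using x1_le_near[OF that] y1_pos k1_nonneg by (simp add: mult_left_mono)
  have "- excess t \<le> max (- excess 0) (y1 * k1 * x1_gain * \<delta> / D)"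
    using le_max_if_linear_decay[OF neg_excess_deriv D_pos decay \<open>t \<ge> 0\<close>] .
  moreover have "- excess 0 \<le> \<delta>"
  proof -
    have "0 \<le> y1 * x1 0" using components_nonneg(2)[of 0] y1_pos by simp
    with initial_deviation_le(1) show ?thesis by (simp add: excess_def abs_le_iff)
  qed
  ultimately have "S0 - s1 t \<le> \<delta> + y1 * k1 * x1_gain * \<delta> / D + (1 + y1) * \<delta>"
    using y1x1 washout_gain_terms_bounds(3)[OF \<delta>_nonneg] \<delta>_nonneg by (simp add: excess_def)
  moreover note s1_le_near[OF \<open>t \<ge> 0\<close>]
  ultimately show ?thesis
    unfolding abs_le_iff
    using washout_gain_mult[of \<delta>] washout_gain_terms_bounds[OF \<delta>_nonneg] \<delta>_nonneg
    by linarith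
qed

lemma s3_le_near: "t \<ge> 0 \<Longrightarrow> s3 t \<le> washout_gain * \<delta>"
proof -
  assume "t \<ge> 0"
  have decay: "- D * s3 s + y4 * mu1 (s1 s) * x1 s
      \<le> - D * s3 s + y4 * mu1 (S0 + 1 + y1) * x1_gain * \<delta>" if "s \<ge> 0" for s
    using uptake_le_near[OF that] y4_pos by (simp add: mult.assoc)
  have "s3 t \<le> max (s3 0) (y4 * mu1 (S0 + 1 + y1) * x1_gain * \<delta> / D)"
    using le_max_if_linear_decay[OF s3_deriv D_pos decay \<open>t \<ge> 0\<close>] .
  also have "\<dots> \<le> washout_gain * \<delta>"
    using initial_deviation_le(4) washout_gain_mult[of \<delta>]
      washout_gain_terms_bounds[OF \<delta>_nonneg] \<delta>_nonneg
    by (intro max.boundedI) linarith+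
  finally show ?thesis .
qed

lemma s2_le_near: "t \<ge> 0 \<Longrightarrow> s2 t \<le> washout_gain * \<delta>"
proof -
  assume "t \<ge> 0"
  have decay: "- D * s2 s + y2 * mu1 (s1 s) * x1 s - y3 * mu2 (s2 s) (s3 s) * x2 s
      \<le> - D * s2 s + y2 * mu1 (S0 + 1 + y1) * x1_gain * \<delta>" if "s \<ge> 0" for s
  proof -
    have "y2 * (mu1 (s1 s) * x1 s) \<le> y2 * (mu1 (S0 + 1 + y1) * (x1_gain * \<delta>))"
      using uptake_le_near[OF that] y2_pos by simp
    moreover have "0 \<le> y3 * mu2 (s2 s) (s3 s) * x2 s"
      using y3_pos mu2_nonneg components_nonneg[OF that] by simp
    ultimately show ?thesis by (simp add: mult.assoc)
  qed
  have "s2 t \<le> max (s2 0) (y2 * mu1 (S0 + 1 + y1) * x1_gain * \<delta> / D)"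
    using le_max_if_linear_decay[OF s2_deriv D_pos decay \<open>t \<ge> 0\<close>] .
  also have "\<dots> \<le> washout_gain * \<delta>"
    using initial_deviation_le(3) washout_gain_mult[of \<delta>]
      washout_gain_terms_bounds[OF \<delta>_nonneg] \<delta>_nonneg
    by (intro max.boundedI) linarith+
  finally show ?thesis .
qed

lemma x2_le_near:
  assumes mu2_le: "\<And>a b. 0 \<le> a \<Longrightarrow> a \<le> washout_gain * \<delta> \<Longrightarrow> 0 \<le> b \<Longrightarrow> b \<le> washout_gain * \<delta>
      \<Longrightarrow> mu2 a b \<le> D2"
    and "t \<ge> 0"
  shows "x2 t \<le> \<delta>"
proof (rule le_if_deriv_nonpos_above[OF x2_deriv initial_deviation_le(5) _ \<open>t \<ge> 0\<close>])
  fix s :: real assume "s \<ge> 0"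
  then have "(mu2 (s2 s) (s3 s) - D2) * x2 s \<le> 0"
    using mu2_le components_nonneg s2_le_near s3_le_near by (intro mult_nonpos_nonneg) auto
  then show "- D2 * x2 s + mu2 (s2 s) (s3 s) * x2 s \<le> 0" by (simp add: algebra_simps)
qed

lemma dist_washout_le_near:
  assumes "\<And>a b. 0 \<le> a \<Longrightarrow> a \<le> washout_gain * \<delta> \<Longrightarrow> 0 \<le> b \<Longrightarrow> b \<le> washout_gain * \<delta>
      \<Longrightarrow> mu2 a b \<le> D2"
    and "t \<ge> 0"
  shows "dist (x t) washout \<le> 5 * washout_gain * \<delta>"
proof -
  have "\<delta> \<le> washout_gain * \<delta>" "x1_gain * \<delta> \<le> washout_gain * \<delta>"
    using washout_gain_mult[of \<delta>] washout_gain_terms_bounds[OF \<delta>_nonneg] \<delta>_nonneg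
    by linarith+
  moreover note x1_le_near[OF \<open>t \<ge> 0\<close>] x2_le_near[OF assms] s1_deviation_le_near[OF \<open>t \<ge> 0\<close>]
    s2_le_near[OF \<open>t \<ge> 0\<close>] s3_le_near[OF \<open>t \<ge> 0\<close>] components_nonneg[OF \<open>t \<ge> 0\<close>]
  ultimately show ?thesis
    using dist_quintuple_le[of "s1 t" "x1 t" "s2 t" "s3 t" "x2 t" S0 0 0 0 0]
    by (simp add: state_eq dist_real_def)
qed

end

end

context chemostat
begin

lemma washout_stable:
  assumes "\<epsilon> > 0"
  shows "\<exists>\<delta>>0. \<forall>x. is_solution rhs x \<and> dist (x 0) washout < \<delta> \<longrightarrow>
    (\<forall>t\<ge>0. dist (x t) washout < \<epsilon>)"
proof -
  obtain \<rho> where "\<rho> > 0"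
    and \<rho>: "\<And>a b. 0 \<le> a \<Longrightarrow> a \<le> \<rho> \<Longrightarrow> 0 \<le> b \<Longrightarrow> b \<le> \<rho> \<Longrightarrow> mu2 a b < D2"
    using mu2_less_near_origin[OF D2_pos] by blast
  define \<delta> where "\<delta> = min 1 (min (\<epsilon> / (10 * washout_gain)) (\<rho> / washout_gain))"
  have "\<delta> > 0" "\<delta> \<le> 1"
    using assms \<open>\<rho> > 0\<close> washout_gain_pos by (simp_all add: \<delta>_def)
  have "washout_gain * \<delta> \<le> \<rho>" "5 * washout_gain * \<delta> < \<epsilon>"
    using assms washout_gain_pos
    by (auto simp: \<delta>_def min_def field_simps)
  have "dist (x t) washout < \<epsilon>"
    if "is_solution rhs x" "dist (x 0) washout < \<delta>" "t \<ge> 0" for x t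
  proof -
    interpret chemostat_solution D S0 k1 D1 D2 y1 y2 y3 y4 mu1 mu2 x
      by unfold_locales (fact that(1))
    have "dist (x t) washout \<le> 5 * washout_gain * \<delta>"
      using \<rho> \<open>washout_gain * \<delta> \<le> \<rho>\<close> that(2,3) \<open>\<delta> > 0\<close> \<open>\<delta> \<le> 1\<close>
      by (intro dist_washout_le_near) force+
    with \<open>5 * washout_gain * \<delta> < \<epsilon>\<close> show ?thesis by linarith
  qed
  with \<open>\<delta> > 0\<close> show ?thesis by blast
qed

theorem washout_globally_asymptotically_stable: "globally_asymptotically_stable rhs washout"
  unfolding globally_asymptotically_stable_def
proof (intro conjI allI impI)
  show "washout \<in> orthant" using S0_pos by (simp add: orthant_def)
  show "rhs washout = 0" by (simp add: chemo_field_def zero_prod_def)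
  show "\<exists>\<delta>>0. \<forall>x. is_solution rhs x \<and> dist (x 0) washout < \<delta> \<longrightarrow> (\<forall>t\<ge>0. dist (x t) washout < \<epsilon>)"
    if "\<epsilon> > 0" for \<epsilon>
    using that by (rule washout_stable)
  fix x assume "is_solution rhs x"
  then interpret chemostat_solution D S0 k1 D1 D2 y1 y2 y3 y4 mu1 mu2 x
    by unfold_locales
  show "(x \<longlongrightarrow> washout) at_top" by (rule converges_to_washout)
qed

end

theorem proposition2p2:
  fixes D S0 k1 k2 D1 D2 y1 y2 y3 y4 :: real
    and mu1 mu1' :: "real \<Rightarrow> real"
    and mu2 d2mu2 d3mu2 :: "real \<Rightarrow> real \<Rightarrow> real"
    and \<Gamma> :: "real \<Rightarrow> real"
  assumes "D > 0" and "S0 > 0" and "k1 \<ge> 0" and "k2 \<ge> 0"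
    and "D1 = D + k1" and "D2 = D + k2"
    and "y1 > 0" and "y2 > 0" and "y3 > 0" and "y4 > 0"
    \<comment> \<open>(H1)\<close>
    and H1a: "\<And>s. s \<ge> 0 \<Longrightarrow> (mu1 has_real_derivative mu1' s) (at s within {0..})"
    and H1b: "continuous_on {0..} mu1'"
    and H1c: "\<And>s. s > 0 \<Longrightarrow> mu1' s > 0"
    \<comment> \<open>(H2)\<close>
    and H2a: "mu1 0 = 0"
    and H2b: "\<And>s. s > 0 \<Longrightarrow> mu1 s > 0"
    \<comment> \<open>(H3): C1 on the closed quadrant, with partial derivatives d2mu2, d3mu2\<close>
    and H3a: "\<And>s2 s3. s2 \<ge> 0 \<Longrightarrow> s3 \<ge> 0 \<Longrightarrow>
                ((\<lambda>p. mu2 (fst p) (snd p)) has_derivative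
                   (\<lambda>h. d2mu2 s2 s3 * fst h + d3mu2 s2 s3 * snd h))
                (at (s2, s3) within {0..} \<times> {0..})"
    and H3b: "continuous_on ({0..} \<times> {0..}) (\<lambda>p. d2mu2 (fst p) (snd p))"
    and H3c: "continuous_on ({0..} \<times> {0..}) (\<lambda>p. d3mu2 (fst p) (snd p))"
    and H3d: "\<And>s2 s3. s2 > 0 \<Longrightarrow> s3 > 0 \<Longrightarrow> mu2 s2 s3 > 0"
    \<comment> \<open>(H4), (H5)\<close>
    and H4: "\<And>s2. s2 \<ge> 0 \<Longrightarrow> ((\<lambda>s3. mu2 s2 s3) \<longlongrightarrow> 0) at_top"
    and H5: "\<And>s3. s3 \<ge> 0 \<Longrightarrow> ((\<lambda>s2. mu2 s2 s3) \<longlongrightarrow> 0) at_top"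
    \<comment> \<open>(H6)\<close>
    and H6a: "\<And>s3. s3 \<ge> 0 \<Longrightarrow> mu2 0 s3 = 0"
    and H6b: "\<And>s2. s2 > 0 \<Longrightarrow> mu2 s2 0 \<ge> 0"
    \<comment> \<open>(H7)\<close>
    and H7a: "continuous_on {0..} \<Gamma>"
    and H7b: "\<And>s2 s3. s2 \<ge> 0 \<Longrightarrow> s3 \<ge> 0 \<Longrightarrow> s2 < \<Gamma> s3 \<Longrightarrow> d2mu2 s2 s3 > 0"
    and H7c: "\<And>s2 s3. s2 \<ge> 0 \<Longrightarrow> s3 \<ge> 0 \<Longrightarrow> s2 > \<Gamma> s3 \<Longrightarrow> d2mu2 s2 s3 < 0"
    \<comment> \<open>hypothesis of the proposition\<close>
    and "break_even mu1 D1 \<ge> ereal S0"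
  shows "globally_asymptotically_stable
           (chemo_field D S0 D1 D2 y1 y2 y3 y4 mu1 mu2) (S0, 0, 0, 0, 0)"
proof -
  have mu1_strict_mono: "strict_mono_on {0..} mu1"
    using H1a H1c by (rule strict_mono_on_if_deriv_pos)
  have mu1_continuous: "continuous_on {0..} mu1"
    using H1a by (intro DERIV_continuous_on) auto
  have "mu1 S0 \<le> D1"
    using assms(1-3,5,27) H2a
    by (intro break_even_ge_imp_le[OF mu1_strict_mono mu1_continuous]) auto
  have mu2_nonneg: "0 \<le> mu2 a b" if "0 \<le> a" "0 \<le> b" for a b
    using that H3d[of a b] H6a[of b] H6b[of a] by (cases "a = 0"; cases "b = 0") auto
  have "continuous_on ({0..} \<times> {0..}) (\<lambda>(a, b). mu2 a b)"
    using H3a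
    by (intro has_derivative_continuous_on[where
          f' = "\<lambda>p h. d2mu2 (fst p) (snd p) * fst h + d3mu2 (fst p) (snd p) * snd h"])
      (auto simp: split_beta')
  interpret chemostat D S0 k1 D1 D2 y1 y2 y3 y4 mu1 mu2
    using assms(1-10) mu1_strict_mono H2a mu1_continuous \<open>mu1 S0 \<le> D1\<close> mu2_nonneg
      \<open>continuous_on ({0..} \<times> {0..}) (\<lambda>(a, b). mu2 a b)\<close> H6a[of 0]
    by unfold_locales auto
  show ?thesis by (rule washout_globally_asymptotically_stable)
qed

end
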